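(* Let $D$ be a euclidean polygon with a straight triangulation $\mathcal{T}$. Let $A$ be a union of $k$ disjoint straight arcs, each endpoint of which is a vertex of $\mathcal{T}$ or a point on $\partial D$, and with interiors in the interior of $D$. Then there is a realisation of $\mathcal{T}^{(k)}$ as a straight triangulation of $D$ that contains $A$ as a subcomplex.
   Context: A triangulation of a subset of euclidean space is straight if the inclusion of each simplex is an affine map. $\mathcal{T}^{(n)}$ denotes the $n$-fold iterated barycentric subdivision; a realisation of it as a straight triangulation of $D$ is a straight triangulation of $D$ subdividing $\mathcal{T}$ that is combinatorially the $n$-fold barycentric subdivision, the new vertex of each subdivided simplex being placed at some (not necessarily barycentric) point of its interior. *)

theory Defs
  imports "HOL-Analysis.Analysis"
begin

type_synonym pt = "real^2"

definition straight_triangulation :: "pt set \<Rightarrow> pt set set \<Rightarrow> bool" where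
  "straight_triangulation D K \<longleftrightarrow>
     finite K \<and>
     (\<forall>\<sigma>\<in>K. \<sigma> \<noteq> {} \<and> finite \<sigma> \<and> \<not> affine_dependent \<sigma>) \<and>
     (\<forall>\<sigma>\<in>K. \<forall>\<tau>. \<tau> \<noteq> {} \<and> \<tau> \<subseteq> \<sigma> \<longrightarrow> \<tau> \<in> K) \<and>
     (\<forall>\<sigma>\<in>K. \<forall>\<tau>\<in>K. convex hull \<sigma> \<inter> convex hull \<tau> = convex hull (\<sigma> \<inter> \<tau>)) \<and>
     \<Union> ((\<lambda>\<sigma>. convex hull \<sigma>) ` K) = D"

definition vertices :: "pt set set \<Rightarrow> pt set" where
  "vertices K = \<Union> K"

text \<open>One step of (generalised) barycentric subdivision: each simplex \<sigma> of K
  gets a new vertex b \<sigma>; the simplices of the subdivision are the images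
  of nonempty chains of simplices of K.\<close>
definition bsd_step :: "pt set set \<Rightarrow> (pt set \<Rightarrow> pt) \<Rightarrow> pt set set" where
  "bsd_step K b = {b ` C | C. C \<noteq> {} \<and> C \<subseteq> K \<and> Complete_Partial_Order.chain (\<subseteq>) C}"

text \<open>realises_bsd T n L: L is a realisation of the n-fold iterated barycentric
  subdivision of T, where in each step the new vertex of each simplex is placed
  at some point of its (relative) interior.\<close>
inductive realises_bsd :: "pt set set \<Rightarrow> nat \<Rightarrow> pt set set \<Rightarrow> bool" for T where
  base: "realises_bsd T 0 T"
| step: "realises_bsd T n L \<Longrightarrow> (\<forall>\<sigma>\<in>L. b \<sigma> \<in> rel_interior (convex hull \<sigma>))
          \<Longrightarrow> realises_bsd T (Suc n) (bsd_step L b)"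

definition is_subcomplex_set :: "pt set \<Rightarrow> pt set set \<Rightarrow> bool" where
  "is_subcomplex_set A K \<longleftrightarrow>
     (\<exists>S\<subseteq>K. (\<forall>\<sigma>\<in>S. \<forall>\<tau>. \<tau> \<noteq> {} \<and> \<tau> \<subseteq> \<sigma> \<longrightarrow> \<tau> \<in> S) \<and>
             A = \<Union> ((\<lambda>\<sigma>. convex hull \<sigma>) ` S))"

end

theory Submission
  imports Defs
begin

(*
  One subdivision step makes an arc [p, q] a union of simplices: place the new vertex of every
  simplex whose relative interior meets the arc on the arc, at p or q if one of them lies in that
  relative interior (the hypotheses on the endpoints prevent both from doing so). For x on the
  arc, the ray from the new vertex of the carrier of x through x leaves the carrier at a point of
  the arc which is the new vertex of its own carrier, since a line through the relative interior
  of a simplex meets each proper face at most once; the edge joining the two new vertices lies on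
  the arc and contains x. A union of simplices remains one under further subdivision, so k steps
  handle k arcs.
*)

section \<open>Simplices, segments and chains\<close>

lemma proper_face_of_convex_hull:
  fixes M :: "'a::euclidean_space set"
  assumes "\<not> affine_dependent M" "N \<subset> M"
  shows "convex hull N face_of convex hull M" "convex hull N \<noteq> convex hull M"
proof -
  show "convex hull N face_of convex hull M"
    using face_of_convex_hull_affine_independent[OF assms(1)] assms(2) by blast
  obtain v where v: "v \<in> M" "v \<notin> N"
    using assms(2) by blast
  show "convex hull N \<noteq> convex hull M"
  proof
    assume "convex hull N = convex hull M"
    then have "v extreme_point_of convex hull N"
      using extreme_point_of_convex_hull_affine_independent assms(1) v(1) by metis
    then show False
      using v(2) extreme_point_of_convex_hull by metis
  qed
qed

lemma convex_hull_psubset_disjoint_rel_interior: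
  fixes M :: "'a::euclidean_space set"
  assumes "\<not> affine_dependent M" "N \<subset> M"
  shows "convex hull N \<inter> rel_interior (convex hull M) = {}"
  using face_of_disjoint_rel_interior proper_face_of_convex_hull[OF assms] by blast

lemma affine_hull_psubset_disjoint_rel_interior:
  fixes M :: "'a::euclidean_space set"
  assumes "\<not> affine_dependent M" "N \<subset> M"
  shows "affine hull N \<inter> rel_interior (convex hull M) = {}"
  using affine_hull_face_of_disjoint_rel_interior[OF convex_convex_hull proper_face_of_convex_hull[OF assms]]
  by simp

lemma rel_interior_face_exists:
  fixes \<sigma> :: "'a::euclidean_space set"
  assumes "\<not> affine_dependent \<sigma>" "x \<in> convex hull \<sigma>"
  shows "\<exists>\<tau>\<subseteq>\<sigma>. \<tau> \<noteq> {} \<and> x \<in> rel_interior (convex hull \<tau>)"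
  using assms
proof (induction "card \<sigma>" arbitrary: \<sigma> rule: less_induct)
  case less
  show ?case
  proof (cases "x \<in> rel_interior (convex hull \<sigma>)")
    case True
    then show ?thesis
      using less.prems(2) by auto
  next
    case False
    have fin: "finite \<sigma>"
      using less.prems(1) aff_independent_finite by blast
    then have "x \<in> rel_frontier (convex hull \<sigma>)"
      using less.prems(2) False by (simp add: rel_frontier_def closure_convex_hull finite_imp_compact)
    then obtain v where v: "v \<in> \<sigma>" "x \<in> convex hull (\<sigma> - {v})"
      using rel_frontier_convex_hull_cases[OF less.prems(1)] by blast
    have "card (\<sigma> - {v}) < card \<sigma>"
      using fin v(1) by (rule card_Diff1_less)
    moreover have "\<not> affine_dependent (\<sigma> - {v})"
      using less.prems(1) affine_independent_subset by blast
    ultimately show ?thesis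
      using less.hyps v(2) by (meson Diff_subset subset_trans)
  qed
qed

lemma closed_segment_same_ray:
  fixes c :: "'a::euclidean_space"
  assumes "x \<in> closed_segment c y" "x \<in> closed_segment c z" "x \<noteq> c"
  shows "y \<in> closed_segment c z \<or> z \<in> closed_segment c y"
proof -
  have "collinear (affine hull {c, x})"
    by (simp add: collinear_affine_hull_collinear)
  moreover have "y \<in> affine hull {c, x}" "z \<in> affine hull {c, x}"
    using assms collinear_3_imp_in_affine_hull[of c x] collinear_closed_segment
    by (metis collinear_subset ends_in_segment empty_subsetI insert_subset)+
  moreover have "c \<in> affine hull {c, x}"
    by (simp add: hull_inc)
  ultimately have "collinear {y, c, z}"
    by (meson collinear_subset empty_subsetI insert_subset)
  then consider "y \<in> closed_segment c z" | "c \<in> closed_segment y z" | "z \<in> closed_segment c y"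
    unfolding collinear_between_cases between_mem_segment by (auto simp: closed_segment_commute)
  then show ?thesis
  proof cases
    case 2
    then have "closed_segment y c \<inter> closed_segment c z = {c}"
      by (rule Int_closed_segment[OF disjI1])
    then show ?thesis
      using assms by (auto simp: closed_segment_commute)
  qed auto
qed

lemma rel_frontier_ray_unique:
  fixes S :: "'a::euclidean_space set"
  assumes "convex S" "c \<in> rel_interior S" "y \<in> rel_frontier S" "z \<in> rel_frontier S"
    and "x \<in> open_segment c y" "x \<in> open_segment c z"
  shows "y = z"
proof -
  have "y \<notin> open_segment c z" "z \<notin> open_segment c y"
    using rel_interior_closure_convex_segment[OF assms(1,2)] assms(3,4)
    unfolding rel_frontier_def by blast+
  moreover have "c \<noteq> y" "c \<noteq> z"
    using assms(2-4) unfolding rel_frontier_def by auto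
  moreover have "y \<in> closed_segment c z \<or> z \<in> closed_segment c y"
    using assms(5,6) by (intro closed_segment_same_ray) (auto simp: open_segment_def)
  ultimately show ?thesis
    unfolding open_segment_def by blast
qed

lemma finite_chain_Union_in:
  assumes "finite C" "C \<noteq> {}" "Complete_Partial_Order.chain (\<subseteq>) C"
  shows "\<Union>C \<in> C"
  using Union_in_chain[of C UNIV] assms by (simp add: subset_chain_def chain_def)

lemma finite_chain_induct [consumes 3, case_names singleton insert_top]:
  assumes "finite C" "C \<noteq> {}" "Complete_Partial_Order.chain (\<subseteq>) C"
    and singleton: "\<And>\<sigma>. P {\<sigma>}"
    and insert_top: "\<And>\<sigma> C. finite C \<Longrightarrow> C \<noteq> {} \<Longrightarrow> Complete_Partial_Order.chain (\<subseteq>) C \<Longrightarrow>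
      \<Union>C \<subset> \<sigma> \<Longrightarrow> P C \<Longrightarrow> P (insert \<sigma> C)"
  shows "P C"
  using assms(1-3)
proof (induction "card C" arbitrary: C rule: less_induct)
  case less
  define M where "M = \<Union>C"
  have "M \<in> C"
    using finite_chain_Union_in less.prems unfolding M_def .
  show ?case
  proof (cases "C = {M}")
    case True
    then show ?thesis
      using singleton by simp
  next
    case False
    define C' where "C' = C - {M}"
    have C': "finite C'" "C' \<noteq> {}" "Complete_Partial_Order.chain (\<subseteq>) C'"
      using less.prems False \<open>M \<in> C\<close> unfolding C'_def by (auto intro: chain_subset)
    have "\<Union>C' \<in> C'"
      using finite_chain_Union_in C' .
    then have "\<Union>C' \<subset> M"
      unfolding C'_def M_def by auto
    moreover have "P C'"
      using less.hyps C' card_Diff1_less[OF less.prems(1) \<open>M \<in> C\<close>] unfolding C'_def by blast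
    moreover have "C = insert M C'"
      using \<open>M \<in> C\<close> unfolding C'_def by blast
    ultimately show ?thesis
      using insert_top C' by metis
  qed
qed

section \<open>Straight triangulations\<close>

locale straight_triangulated =
  fixes D :: "pt set" and L :: "pt set set"
  assumes triangulation: "straight_triangulation D L"
begin

lemma finite_simplices: "finite L"
  using triangulation unfolding straight_triangulation_def by blast

lemma simplex_nonempty: "\<sigma> \<in> L \<Longrightarrow> \<sigma> \<noteq> {}"
  and simplex_finite: "\<sigma> \<in> L \<Longrightarrow> finite \<sigma>"
  and simplex_independent: "\<sigma> \<in> L \<Longrightarrow> \<not> affine_dependent \<sigma>"
  using triangulation unfolding straight_triangulation_def by blast+

lemma face_closed: "\<sigma> \<in> L \<Longrightarrow> \<tau> \<noteq> {} \<Longrightarrow> \<tau> \<subseteq> \<sigma> \<Longrightarrow> \<tau> \<in> L"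
  using triangulation unfolding straight_triangulation_def by blast

lemma convex_hull_Int_simplices:
  "\<sigma> \<in> L \<Longrightarrow> \<tau> \<in> L \<Longrightarrow> convex hull \<sigma> \<inter> convex hull \<tau> = convex hull (\<sigma> \<inter> \<tau>)"
  using triangulation unfolding straight_triangulation_def by blast

lemma Union_simplices: "(\<Union>\<sigma>\<in>L. convex hull \<sigma>) = D"
  using triangulation unfolding straight_triangulation_def by blast

lemma carrier_subset:
  assumes "\<sigma> \<in> L" "\<tau> \<in> L" "x \<in> rel_interior (convex hull \<sigma>)" "x \<in> convex hull \<tau>"
  shows "\<sigma> \<subseteq> \<tau>"
proof (rule ccontr)
  assume "\<not> \<sigma> \<subseteq> \<tau>"
  then have "\<sigma> \<inter> \<tau> \<subset> \<sigma>"
    by blast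
  moreover have "x \<in> convex hull (\<sigma> \<inter> \<tau>)"
    using convex_hull_Int_simplices[OF assms(1,2)] assms(3,4) rel_interior_subset by blast
  ultimately show False
    using convex_hull_psubset_disjoint_rel_interior simplex_independent assms(1,3) by blast
qed

lemma carrier_unique:
  assumes "\<sigma> \<in> L" "\<tau> \<in> L" "x \<in> rel_interior (convex hull \<sigma>)" "x \<in> rel_interior (convex hull \<tau>)"
  shows "\<sigma> = \<tau>"
  using carrier_subset assms rel_interior_subset by (metis subset_antisym subsetD)

lemma carrier_exists:
  assumes "\<sigma> \<in> L" "x \<in> convex hull \<sigma>"
  shows "\<exists>\<tau>\<subseteq>\<sigma>. \<tau> \<in> L \<and> x \<in> rel_interior (convex hull \<tau>)"
  using rel_interior_face_exists[OF simplex_independent[OF assms(1)] assms(2)] face_closed assms(1)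
  by blast

lemma rel_frontier_carrier:
  assumes "\<sigma> \<in> L" "y \<in> rel_frontier (convex hull \<sigma>)"
  shows "\<exists>\<tau>\<subset>\<sigma>. \<tau> \<in> L \<and> y \<in> rel_interior (convex hull \<tau>)"
proof -
  have "y \<in> convex hull \<sigma>"
    using assms(2) simplex_finite[OF assms(1)]
    by (simp add: rel_frontier_def closure_convex_hull finite_imp_compact)
  then obtain \<tau> where \<tau>: "\<tau> \<subseteq> \<sigma>" "\<tau> \<in> L" "y \<in> rel_interior (convex hull \<tau>)"
    using carrier_exists[OF assms(1)] by blast
  moreover have "\<tau> \<noteq> \<sigma>"
    using \<tau>(3) assms(2) unfolding rel_frontier_def by blast
  ultimately show ?thesis
    by blast
qed

lemma closed_region: "closed D"
  unfolding Union_simplices[symmetric]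
  using finite_simplices simplex_finite
  by (intro closed_UN) (auto intro: compact_imp_closed finite_imp_compact_convex_hull)

lemma vertex_simplex: "v \<in> vertices L \<Longrightarrow> {v} \<in> L"
  unfolding vertices_def using face_closed by blast

lemma vertices_subset: "vertices L \<subseteq> D"
  unfolding vertices_def Union_simplices[symmetric] using hull_inc by fastforce

lemma vertex_carrier:
  assumes "v \<in> vertices L" "\<sigma> \<in> L" "v \<in> rel_interior (convex hull \<sigma>)"
  shows "\<sigma> = {v}"
  using carrier_unique[OF assms(2) vertex_simplex[OF assms(1)] assms(3)] by simp

lemma star_segments_subset:
  assumes "\<sigma> \<in> L" "m \<in> rel_interior (convex hull \<sigma>)" "m \<in> interior D"
  obtains r where "r > 0" "\<And>w c. w \<in> ball m r \<Longrightarrow> c \<in> convex hull \<sigma> \<Longrightarrow> closed_segment c w \<subseteq> D"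
proof -
  obtain r1 where r1: "r1 > 0" "ball m r1 \<subseteq> D"
    using assms(3) mem_interior by blast
  define F where "F = (\<Union>\<tau>\<in>{\<tau>\<in>L. m \<notin> convex hull \<tau>}. convex hull \<tau>)"
  have "closed F"
    unfolding F_def using finite_simplices simplex_finite
    by (intro closed_UN) (auto intro: compact_imp_closed finite_imp_compact_convex_hull)
  moreover have "m \<notin> F"
    unfolding F_def by blast
  ultimately obtain r2 where r2: "r2 > 0" "ball m r2 \<subseteq> - F"
    using open_contains_ball[of "- F"] by blast
  have "closed_segment c w \<subseteq> D" if w: "w \<in> ball m (min r1 r2)" and c: "c \<in> convex hull \<sigma>" for w c
  proof -
    have "w \<in> D" "w \<notin> F"
      using w r1(2) r2(2) by auto
    then obtain \<tau> where \<tau>: "\<tau> \<in> L" "w \<in> convex hull \<tau>" "m \<in> convex hull \<tau>"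
      unfolding F_def Union_simplices[symmetric] by blast
    then have "c \<in> convex hull \<tau>"
      using carrier_subset[OF assms(1) \<tau>(1) assms(2)] c hull_mono by blast
    then have "closed_segment c w \<subseteq> convex hull \<tau>"
      using \<tau>(2) by (simp add: closed_segment_subset)
    then show ?thesis
      using \<tau>(1) Union_simplices by blast
  qed
  then show ?thesis
    using that[of "min r1 r2"] r1(1) r2(1) by simp
qed

lemma rel_interior_subset_interior:
  assumes "\<sigma> \<in> L" "m \<in> rel_interior (convex hull \<sigma>)" "m \<in> interior D"
  shows "rel_interior (convex hull \<sigma>) \<subseteq> interior D"
proof
  fix p assume p: "p \<in> rel_interior (convex hull \<sigma>)"
  obtain r where r: "r > 0" "\<And>w c. w \<in> ball m r \<Longrightarrow> c \<in> convex hull \<sigma> \<Longrightarrow> closed_segment c w \<subseteq> D"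
    using star_segments_subset[OF assms] by blast
  have "m \<in> affine hull (convex hull \<sigma>)"
    using hull_inc[OF subsetD[OF rel_interior_subset assms(2)]] .
  then obtain e where e: "e > 1" "(1 - e) *\<^sub>R m + e *\<^sub>R p \<in> convex hull \<sigma>"
    using convex_rel_interior_if2[OF convex_convex_hull p] by blast
  define c where "c = (1 - e) *\<^sub>R m + e *\<^sub>R p"
  define l where "l = 1 - 1 / e"
  define h where "h = (\<lambda>w. (1 - l) *\<^sub>R c + l *\<^sub>R w)"
  \<comment> \<open>The homothety with centre c mapping m to p carries a ball around m into D.\<close>
  have l: "0 < l" "l < 1"
    unfolding l_def using e(1) by simp_all
  have "h m = p"
  proof -
    have "e \<noteq> 0"
      using e(1) by simp
    then show ?thesis
      unfolding h_def c_def l_def by (simp add: algebra_simps)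
  qed
  have "open (h ` ball m r)"
    unfolding h_def using open_affinity[OF open_ball, of l "(1 - l) *\<^sub>R c"] l(1) by simp
  moreover have "h m \<in> h ` ball m r"
    using r(1) by simp
  moreover have "h ` ball m r \<subseteq> D"
  proof
    fix z assume "z \<in> h ` ball m r"
    then obtain w where w: "w \<in> ball m r" "z = h w"
      by blast
    have "z \<in> closed_segment c w"
      unfolding closed_segment_def w(2) h_def using l by force
    then show "z \<in> D"
      using r(2)[OF w(1) e(2)] unfolding c_def by blast
  qed
  ultimately show "p \<in> interior D"
    using \<open>h m = p\<close> interiorI by metis
qed

lemma segment_ends_not_in_same_rel_interior:
  assumes "\<sigma> \<in> L" "p \<noteq> q" "open_segment p q \<subseteq> interior D"
    and "p \<in> vertices L \<or> p \<in> frontier D" "q \<in> vertices L \<or> q \<in> frontier D"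
    and p: "p \<in> rel_interior (convex hull \<sigma>)" and q: "q \<in> rel_interior (convex hull \<sigma>)"
  shows False
proof -
  consider "p \<in> vertices L" | "q \<in> vertices L" | "p \<in> frontier D"
    using assms(4) by blast
  then show False
  proof cases
    case 1
    then show False
      using vertex_carrier[OF 1 assms(1) p] q assms(2) by simp
  next
    case 2
    then show False
      using vertex_carrier[OF 2 assms(1) q] p assms(2) by simp
  next
    case 3
    have m: "midpoint p q \<in> open_segment p q"
      using assms(2) by simp
    have "closed_segment p q \<subseteq> rel_interior (convex hull \<sigma>)"
      using p q by (simp add: closed_segment_subset convex_rel_interior)
    then have "midpoint p q \<in> rel_interior (convex hull \<sigma>)"
      using open_closed_segment[OF m] by (rule subsetD)
    moreover have "midpoint p q \<in> interior D"
      using m assms(3) by (rule subsetD[rotated])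
    ultimately have "rel_interior (convex hull \<sigma>) \<subseteq> interior D"
      by (rule rel_interior_subset_interior[OF assms(1)])
    then show False
      using 3 p unfolding frontier_def by blast
  qed
qed

end

section \<open>Generalised barycentric subdivision\<close>

abbreviation flag :: "'a set set \<Rightarrow> 'a set set \<Rightarrow> bool" where
  "flag L C \<equiv> C \<noteq> {} \<and> C \<subseteq> L \<and> Complete_Partial_Order.chain (\<subseteq>) C"

lemma chain_insert_top:
  assumes "Complete_Partial_Order.chain (\<subseteq>) C" "\<forall>\<tau>\<in>C. \<tau> \<subseteq> \<sigma>"
  shows "Complete_Partial_Order.chain (\<subseteq>) (insert \<sigma> C)"
  using assms by (auto simp: chain_def)

locale centred_subdivision = straight_triangulated +
  fixes b :: "pt set \<Rightarrow> pt"
  assumes centre: "\<forall>\<sigma>\<in>L. b \<sigma> \<in> rel_interior (convex hull \<sigma>)"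
begin

lemma bsd_stepI: "flag L C \<Longrightarrow> b ` C \<in> bsd_step L b"
  unfolding bsd_step_def by blast

lemma bsd_stepE:
  assumes "\<rho> \<in> bsd_step L b"
  obtains C where "flag L C" "\<rho> = b ` C"
  using assms unfolding bsd_step_def by blast

lemma singleton_bsd_step: "\<sigma> \<in> L \<Longrightarrow> {b \<sigma>} \<in> bsd_step L b"
  using bsd_stepI[of "{\<sigma>}"] chain_singleton by auto

lemma finite_flag: "C \<subseteq> L \<Longrightarrow> finite C"
  using finite_simplices finite_subset by blast

lemma flag_top: "flag L C \<Longrightarrow> \<Union>C \<in> L"
  using finite_chain_Union_in finite_flag by blast

lemma convex_hull_centres_subset:
  assumes "C \<subseteq> L" "\<forall>\<tau>\<in>C. \<tau> \<subseteq> \<sigma>"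
  shows "convex hull (b ` C) \<subseteq> convex hull \<sigma>"
proof (rule hull_minimal)
  show "b ` C \<subseteq> convex hull \<sigma>"
  proof
    fix y assume "y \<in> b ` C"
    then obtain \<tau> where \<tau>: "\<tau> \<in> C" "y = b \<tau>"
      by blast
    then have "y \<in> convex hull \<tau>"
      using assms(1) centre rel_interior_subset by blast
    then show "y \<in> convex hull \<sigma>"
      using hull_mono[OF assms(2)[rule_format, OF \<tau>(1)]] by blast
  qed
qed (rule convex_convex_hull)

lemma convex_hull_centres_subset_Union: "C \<subseteq> L \<Longrightarrow> convex hull (b ` C) \<subseteq> convex hull (\<Union>C)"
  using convex_hull_centres_subset[of C "\<Union>C"] by blast

lemma convex_hull_centres_subset_rel_frontier:
  assumes "\<rho> \<in> L" "C \<subseteq> L" "\<Union>C \<subset> \<rho>"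
  shows "convex hull (b ` C) \<subseteq> rel_frontier (convex hull \<rho>)"
proof
  fix z assume "z \<in> convex hull (b ` C)"
  then have "z \<in> convex hull (\<Union>C)"
    using convex_hull_centres_subset_Union[OF assms(2)] by blast
  then show "z \<in> rel_frontier (convex hull \<rho>)"
    using convex_hull_psubset_disjoint_rel_interior[OF simplex_independent[OF assms(1)] assms(3)]
      hull_mono[of "\<Union>C" \<rho>] assms(3) simplex_finite[OF assms(1)]
    by (auto simp: rel_frontier_def closure_convex_hull finite_imp_compact)
qed

lemma flag_independent:
  assumes "flag L C"
  shows "\<not> affine_dependent (b ` C)"
proof -
  from assms have "finite C" "C \<noteq> {}" "Complete_Partial_Order.chain (\<subseteq>) C" "C \<subseteq> L"
    using finite_flag by auto
  then show ?thesis
  proof (induction C rule: finite_chain_induct)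
    case (insert_top \<sigma> C)
    have \<sigma>: "\<sigma> \<in> L" and C: "C \<subseteq> L"
      using insert_top.prems by auto
    have "b ` C \<subseteq> convex hull (\<Union>C)"
      using convex_hull_centres_subset_Union[OF C] hull_subset[of "b ` C" convex] by (rule subset_trans[rotated])
    then have "affine hull (b ` C) \<subseteq> affine hull (\<Union>C)"
      using hull_mono[of "b ` C" "convex hull (\<Union>C)" affine] by simp
    moreover have "b \<sigma> \<notin> affine hull (\<Union>C)"
      using affine_hull_psubset_disjoint_rel_interior[OF simplex_independent[OF \<sigma>] insert_top.hyps(4)]
        centre \<sigma> by blast
    ultimately have "\<not> affine_dependent (insert (b \<sigma>) (b ` C))"
      using affine_independent_insert[OF insert_top.IH[OF C]] by blast
    then show ?case
      by simp
  qed simp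
qed

text \<open>The subdivision of \<sigma> is the cone from b \<sigma> over the subdivided relative boundary of \<sigma>.\<close>
lemma flag_hull_rel_interior:
  assumes "flag L C" "\<sigma> \<in> L" "x \<in> rel_interior (convex hull \<sigma>)" "x \<in> convex hull (b ` C)"
  shows "\<sigma> \<in> C \<and> (x = b \<sigma> \<or> (\<exists>y \<in> convex hull (b ` {\<tau>\<in>C. \<tau> \<subset> \<sigma>}) \<inter> rel_frontier (convex hull \<sigma>).
           x \<in> open_segment (b \<sigma>) y))"
proof -
  have \<sigma>_eq: "\<sigma> = \<rho>" if "\<rho> \<in> L" "x \<in> rel_interior (convex hull \<rho>)" for \<rho>
    using carrier_unique[OF assms(2) that(1) assms(3) that(2)] .
  from assms(1) have "finite C" "C \<noteq> {}" "Complete_Partial_Order.chain (\<subseteq>) C" "C \<subseteq> L"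
    using finite_flag by auto
  then show ?thesis
    using assms(4)
  proof (induction C rule: finite_chain_induct)
    case (singleton \<rho>)
    then show ?case
      using \<sigma>_eq centre by auto
  next
    case (insert_top \<rho> C)
    have \<rho>: "\<rho> \<in> L" "b \<rho> \<in> rel_interior (convex hull \<rho>)"
      using insert_top.prems(1) centre by auto
    obtain z where z: "z \<in> convex hull (b ` C)" "x \<in> closed_segment (b \<rho>) z"
      using insert_top.prems(2) insert_top.hyps(2) by (auto simp: convex_hull_insert_segments)
    have z_frontier: "z \<in> rel_frontier (convex hull \<rho>)"
      using convex_hull_centres_subset_rel_frontier[OF \<rho>(1) _ insert_top.hyps(4)] z(1)
        insert_top.prems(1) by blast
    consider "x = b \<rho>" | "x = z" | "x \<in> open_segment (b \<rho>) z"
      using z(2) unfolding open_segment_def by blast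
    then show ?case
    proof cases
      case 1
      then show ?thesis
        using \<sigma>_eq \<rho> by auto
    next
      case 2
      have "convex hull (b ` {\<tau>\<in>C. \<tau> \<subset> \<sigma>}) \<subseteq> convex hull (b ` {\<tau>\<in>insert \<rho> C. \<tau> \<subset> \<sigma>})"
        by (rule hull_mono) blast
      then show ?thesis
        using insert_top.IH insert_top.prems(1) z(1) 2 by blast
    next
      case 3
      then have "x \<in> rel_interior (convex hull \<rho>)"
        using rel_interior_closure_convex_segment[OF convex_convex_hull \<rho>(2)] z_frontier
        unfolding rel_frontier_def by blast
      then have "\<sigma> = \<rho>"
        using \<sigma>_eq \<rho>(1) by blast
      moreover have "{\<tau>\<in>insert \<rho> C. \<tau> \<subset> \<rho>} = C"
        using insert_top.hyps(4) by blast
      ultimately show ?thesis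
        using 3 z(1) z_frontier by auto
    qed
  qed
qed

lemma flag_below:
  assumes "flag L C" "y \<in> convex hull (b ` {\<tau>\<in>C. \<tau> \<subset> \<sigma>})"
  shows "flag L {\<tau>\<in>C. \<tau> \<subset> \<sigma>}"
proof -
  have "{\<tau>\<in>C. \<tau> \<subset> \<sigma>} \<noteq> {}"
    using assms(2) by (metis convex_hull_empty empty_iff image_empty)
  then show ?thesis
    using assms(1) by (auto intro: chain_compr)
qed

lemma flag_hull_Int:
  assumes "\<sigma> \<in> L" "x \<in> rel_interior (convex hull \<sigma>)"
    and "flag L C1" "x \<in> convex hull (b ` C1)" "flag L C2" "x \<in> convex hull (b ` C2)"
  shows "x \<in> convex hull (b ` (C1 \<inter> C2))"
  using assms
proof (induction "card \<sigma>" arbitrary: \<sigma> x C1 C2 rule: less_induct)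
  case less
  note ray1 = flag_hull_rel_interior[OF less.prems(3,1,2,4)]
  note ray2 = flag_hull_rel_interior[OF less.prems(5,1,2,6)]
  have \<sigma>: "b \<sigma> \<in> convex hull (b ` (C1 \<inter> C2))"
    using ray1 ray2 by (simp add: hull_inc)
  show ?case
  proof (cases "x = b \<sigma>")
    case True
    then show ?thesis
      using \<sigma> by simp
  next
    case False
    define C1' where "C1' = {\<tau>\<in>C1. \<tau> \<subset> \<sigma>}"
    define C2' where "C2' = {\<tau>\<in>C2. \<tau> \<subset> \<sigma>}"
    obtain y1 where y1: "y1 \<in> convex hull (b ` C1')" "y1 \<in> rel_frontier (convex hull \<sigma>)"
      "x \<in> open_segment (b \<sigma>) y1"
      using ray1 False unfolding C1'_def by blast
    obtain y2 where y2: "y2 \<in> convex hull (b ` C2')" "y2 \<in> rel_frontier (convex hull \<sigma>)"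
      "x \<in> open_segment (b \<sigma>) y2"
      using ray2 False unfolding C2'_def by blast
    have "y1 = y2"
      using rel_frontier_ray_unique[OF convex_convex_hull _ y1(2) y2(2) y1(3) y2(3)]
        centre less.prems(1) by blast
    obtain \<tau> where \<tau>: "\<tau> \<subset> \<sigma>" "\<tau> \<in> L" "y1 \<in> rel_interior (convex hull \<tau>)"
      using rel_frontier_carrier[OF less.prems(1) y1(2)] by blast
    then have "card \<tau> < card \<sigma>"
      using simplex_finite[OF less.prems(1)] by (simp add: psubset_card_mono)
    moreover have "flag L C1'" "flag L C2'"
      using flag_below less.prems(3,5) y1(1) y2(1) unfolding C1'_def C2'_def by blast+
    ultimately have "y1 \<in> convex hull (b ` (C1' \<inter> C2'))"
      using less.hyps \<tau>(2,3) y1(1) y2(1) \<open>y1 = y2\<close> by blast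
    moreover have "convex hull (b ` (C1' \<inter> C2')) \<subseteq> convex hull (b ` (C1 \<inter> C2))"
      unfolding C1'_def C2'_def by (rule hull_mono) blast
    ultimately have "closed_segment (b \<sigma>) y1 \<subseteq> convex hull (b ` (C1 \<inter> C2))"
      using \<sigma> by (simp add: closed_segment_subset subsetD)
    then show ?thesis
      using open_closed_segment[OF y1(3)] by blast
  qed
qed

lemma flag_hull_cover:
  assumes "\<sigma> \<in> L" "x \<in> convex hull \<sigma>"
  shows "\<exists>C. flag L C \<and> (\<forall>\<tau>\<in>C. \<tau> \<subseteq> \<sigma>) \<and> x \<in> convex hull (b ` C)"
  using assms
proof (induction "card \<sigma>" arbitrary: \<sigma> x rule: less_induct)
  case less
  show ?case
  proof (cases "x = b \<sigma>")
    case True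
    have "flag L {\<sigma>}"
      using less.prems(1) chain_singleton by auto
    then show ?thesis
      using True by (intro exI[of _ "{\<sigma>}"]) simp
  next
    case False
    obtain y where y: "y \<in> rel_frontier (convex hull \<sigma>)" "x \<in> closed_segment (b \<sigma>) y"
      using segment_to_rel_frontier_aux[OF convex_convex_hull
          finite_imp_bounded_convex_hull[OF simplex_finite[OF less.prems(1)]]
          centre[rule_format, OF less.prems(1)] less.prems(2)] False by blast
    obtain \<tau> where \<tau>: "\<tau> \<subset> \<sigma>" "\<tau> \<in> L" "y \<in> convex hull \<tau>"
      using rel_frontier_carrier[OF less.prems(1) y(1)] rel_interior_subset by blast
    have "card \<tau> < card \<sigma>"
      using \<tau>(1) simplex_finite[OF less.prems(1)] by (simp add: psubset_card_mono)
    then have "\<exists>C. flag L C \<and> (\<forall>\<rho>\<in>C. \<rho> \<subseteq> \<tau>) \<and> y \<in> convex hull (b ` C)"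
      using \<tau>(2,3) by (rule less.hyps)
    then obtain C where C: "flag L C" "\<forall>\<rho>\<in>C. \<rho> \<subseteq> \<tau>" "y \<in> convex hull (b ` C)"
      by blast
    have "\<forall>\<rho>\<in>insert \<sigma> C. \<rho> \<subseteq> \<sigma>"
      using C(2) \<tau>(1) by auto
    moreover have "flag L (insert \<sigma> C)"
      using chain_insert_top[of C \<sigma>] C(1,2) \<tau>(1) less.prems(1) by auto
    moreover have "x \<in> convex hull (b ` insert \<sigma> C)"
    proof -
      have "convex hull (b ` C) \<subseteq> convex hull (b ` insert \<sigma> C)"
        by (rule hull_mono) blast
      then have "closed_segment (b \<sigma>) y \<subseteq> convex hull (b ` insert \<sigma> C)"
        using C(3) by (intro closed_segment_subset) (auto intro: hull_inc)
      then show ?thesis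
        using y(2) by blast
    qed
    ultimately show ?thesis
      by (intro exI[of _ "insert \<sigma> C"]) simp
  qed
qed

lemma finite_bsd_step: "finite (bsd_step L b)"
proof -
  have "bsd_step L b \<subseteq> image b ` Pow L"
    by (auto elim: bsd_stepE)
  then show ?thesis
    using finite_simplices finite_subset by blast
qed

lemma bsd_step_face_closed:
  assumes "\<rho> \<in> bsd_step L b" "\<tau> \<noteq> {}" "\<tau> \<subseteq> \<rho>"
  shows "\<tau> \<in> bsd_step L b"
proof -
  obtain C where C: "flag L C" "\<rho> = b ` C"
    using assms(1) by (rule bsd_stepE)
  define C' where "C' = {c\<in>C. b c \<in> \<tau>}"
  have "\<tau> = b ` C'"
    using C(2) assms(3) unfolding C'_def by blast
  moreover have "flag L C'"
    using C(1) assms(2) \<open>\<tau> = b ` C'\<close> unfolding C'_def by (auto intro: chain_compr)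
  ultimately show ?thesis
    using bsd_stepI by simp
qed

lemma convex_hull_Int_bsd_step:
  assumes "\<rho>1 \<in> bsd_step L b" "\<rho>2 \<in> bsd_step L b"
  shows "convex hull \<rho>1 \<inter> convex hull \<rho>2 = convex hull (\<rho>1 \<inter> \<rho>2)"
proof
  obtain C1 C2 where C: "flag L C1" "\<rho>1 = b ` C1" "flag L C2" "\<rho>2 = b ` C2"
    using assms by (meson bsd_stepE)
  show "convex hull \<rho>1 \<inter> convex hull \<rho>2 \<subseteq> convex hull (\<rho>1 \<inter> \<rho>2)"
  proof
    fix x assume x: "x \<in> convex hull \<rho>1 \<inter> convex hull \<rho>2"
    then have "x \<in> convex hull (\<Union>C1)"
      using convex_hull_centres_subset_Union C by blast
    then obtain \<sigma> where "\<sigma> \<in> L" "x \<in> rel_interior (convex hull \<sigma>)"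
      using carrier_exists flag_top[OF C(1)] by blast
    then have "x \<in> convex hull (b ` (C1 \<inter> C2))"
      using flag_hull_Int C x by blast
    moreover have "convex hull (b ` (C1 \<inter> C2)) \<subseteq> convex hull (\<rho>1 \<inter> \<rho>2)"
      unfolding C(2,4) by (rule hull_mono) blast
    ultimately show "x \<in> convex hull (\<rho>1 \<inter> \<rho>2)"
      by blast
  qed
qed (simp add: hull_mono)

lemma Union_bsd_step: "(\<Union>\<rho>\<in>bsd_step L b. convex hull \<rho>) = D"
proof
  show "(\<Union>\<rho>\<in>bsd_step L b. convex hull \<rho>) \<subseteq> D"
  proof
    fix x assume "x \<in> (\<Union>\<rho>\<in>bsd_step L b. convex hull \<rho>)"
    then obtain \<rho> where \<rho>: "\<rho> \<in> bsd_step L b" "x \<in> convex hull \<rho>"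
      by blast
    obtain C where "flag L C" "\<rho> = b ` C"
      using \<rho>(1) by (rule bsd_stepE)
    with \<rho>(2) have "x \<in> convex hull (\<Union>C)" "\<Union>C \<in> L"
      using convex_hull_centres_subset_Union flag_top by blast+
    then show "x \<in> D"
      unfolding Union_simplices[symmetric] by blast
  qed
  show "D \<subseteq> (\<Union>\<rho>\<in>bsd_step L b. convex hull \<rho>)"
  proof
    fix x assume "x \<in> D"
    then obtain \<sigma> where "\<sigma> \<in> L" "x \<in> convex hull \<sigma>"
      unfolding Union_simplices[symmetric] by blast
    then have "\<exists>C. flag L C \<and> (\<forall>\<tau>\<in>C. \<tau> \<subseteq> \<sigma>) \<and> x \<in> convex hull (b ` C)"
      by (rule flag_hull_cover)
    then obtain C where "flag L C" "x \<in> convex hull (b ` C)"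
      by blast
    moreover have "b ` C \<in> bsd_step L b"
      using calculation(1) by (rule bsd_stepI)
    ultimately show "x \<in> (\<Union>\<rho>\<in>bsd_step L b. convex hull \<rho>)"
      by blast
  qed
qed

lemma straight_triangulation_bsd_step: "straight_triangulation D (bsd_step L b)"
  unfolding straight_triangulation_def
proof (intro conjI ballI allI impI finite_bsd_step Union_bsd_step)
  fix \<rho> assume "\<rho> \<in> bsd_step L b"
  then obtain C where "flag L C" "\<rho> = b ` C"
    by (rule bsd_stepE)
  then show "\<rho> \<noteq> {}" "finite \<rho>" "\<not> affine_dependent \<rho>"
    using finite_flag flag_independent by auto
qed (use bsd_step_face_closed convex_hull_Int_bsd_step in blast)+

lemma vertices_subset_bsd_step: "vertices L \<subseteq> vertices (bsd_step L b)"
proof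
  fix v assume "v \<in> vertices L"
  then have "{v} \<in> L"
    by (rule vertex_simplex)
  moreover have "b {v} = v"
    using centre calculation by force
  ultimately have "{v} \<in> bsd_step L b"
    using singleton_bsd_step by metis
  then show "v \<in> vertices (bsd_step L b)"
    unfolding vertices_def by blast
qed

end

section \<open>Straightening segments\<close>

lemma segment_leaves_closed_segment_through_end:
  fixes p :: "'a::euclidean_space"
  assumes "c \<in> closed_segment p q" "x \<in> closed_segment p q" "x \<in> closed_segment c y" "x \<noteq> c"
    and "y \<notin> closed_segment p q"
  shows "p \<in> open_segment c y \<or> q \<in> open_segment c y"
proof -
  have "closed_segment c p \<union> closed_segment c q = closed_segment p q"
    using Un_closed_segment[OF assms(1)] by (simp add: closed_segment_commute)
  then obtain e where e: "e = p \<or> e = q" "x \<in> closed_segment c e"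
    using assms(2) by blast
  have "closed_segment c e \<subseteq> closed_segment p q"
    using e(1) assms(1) by (intro closed_segment_subset) auto
  then have "e \<in> closed_segment c y"
    using closed_segment_same_ray[OF assms(3) e(2) assms(4)] assms(5) by blast
  moreover have "e \<noteq> c"
    using e(2) assms(4) by auto
  moreover have "e \<noteq> y"
    using e(1) assms(5) by auto
  ultimately show ?thesis
    using e(1) unfolding open_segment_def by blast
qed

lemma line_through_rel_interior_meets_face_once:
  fixes \<sigma> :: "'a::euclidean_space set"
  assumes "\<not> affine_dependent \<sigma>" "\<tau> \<subset> \<sigma>" "c \<in> rel_interior (convex hull \<sigma>)"
    and "y \<in> convex hull \<tau>" "z \<in> convex hull \<tau>" "collinear {y, z, c}"
  shows "y = z"
proof (rule ccontr)
  assume "y \<noteq> z"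
  then have "c \<in> affine hull {y, z}"
    using collinear_3_imp_in_affine_hull assms(6) by blast
  moreover have "affine hull {y, z} \<subseteq> affine hull \<tau>"
    using hull_mono[of "{y, z}" "convex hull \<tau>" affine] assms(4,5) by simp
  ultimately show False
    using affine_hull_psubset_disjoint_rel_interior[OF assms(1,2)] assms(3) by blast
qed

definition union_of_simplices :: "pt set \<Rightarrow> pt set set \<Rightarrow> bool" where
  "union_of_simplices A K \<longleftrightarrow> (\<forall>x\<in>A. \<exists>\<rho>\<in>K. convex hull \<rho> \<subseteq> A \<and> x \<in> convex hull \<rho>)"

lemma union_of_simplices_UN:
  assumes "\<forall>i\<in>I. union_of_simplices (A i) K"
  shows "union_of_simplices (\<Union>i\<in>I. A i) K"
  unfolding union_of_simplices_def
proof
  fix x assume "x \<in> (\<Union>i\<in>I. A i)"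
  then obtain i where i: "i \<in> I" "x \<in> A i"
    by blast
  then obtain \<rho> where "\<rho> \<in> K" "convex hull \<rho> \<subseteq> A i" "x \<in> convex hull \<rho>"
    using assms unfolding union_of_simplices_def by blast
  then show "\<exists>\<rho>\<in>K. convex hull \<rho> \<subseteq> (\<Union>i\<in>I. A i) \<and> x \<in> convex hull \<rho>"
    using i(1) by blast
qed

lemma union_of_simplices_imp_subcomplex:
  assumes "straight_triangulation D K" "union_of_simplices A K"
  shows "is_subcomplex_set A K"
  unfolding is_subcomplex_set_def
proof (intro exI conjI)
  let ?S = "{\<rho>\<in>K. convex hull \<rho> \<subseteq> A}"
  show "\<forall>\<sigma>\<in>?S. \<forall>\<tau>. \<tau> \<noteq> {} \<and> \<tau> \<subseteq> \<sigma> \<longrightarrow> \<tau> \<in> ?S"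
  proof (intro ballI allI impI)
    fix \<sigma> \<tau> assume \<sigma>: "\<sigma> \<in> ?S" and \<tau>: "\<tau> \<noteq> {} \<and> \<tau> \<subseteq> \<sigma>"
    then have "\<tau> \<in> K"
      using straight_triangulated.face_closed[OF straight_triangulated.intro[OF assms(1)]] by blast
    moreover have "convex hull \<tau> \<subseteq> convex hull \<sigma>"
      using \<tau> by (simp add: hull_mono)
    ultimately show "\<tau> \<in> ?S"
      using \<sigma> by blast
  qed
  show "A = \<Union> ((\<lambda>\<sigma>. convex hull \<sigma>) ` ?S)"
    using assms(2) unfolding union_of_simplices_def by blast
qed blast

context centred_subdivision
begin

lemma union_of_simplices_bsd_step:
  assumes "union_of_simplices A L"
  shows "union_of_simplices A (bsd_step L b)"
  unfolding union_of_simplices_def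
proof
  fix x assume "x \<in> A"
  then obtain \<rho> where \<rho>: "\<rho> \<in> L" "convex hull \<rho> \<subseteq> A" "x \<in> convex hull \<rho>"
    using assms unfolding union_of_simplices_def by blast
  have "\<exists>C. flag L C \<and> (\<forall>\<tau>\<in>C. \<tau> \<subseteq> \<rho>) \<and> x \<in> convex hull (b ` C)"
    using \<rho>(1,3) by (rule flag_hull_cover)
  then obtain C where C: "flag L C" "\<forall>\<tau>\<in>C. \<tau> \<subseteq> \<rho>" "x \<in> convex hull (b ` C)"
    by blast
  have "convex hull (b ` C) \<subseteq> A"
    using convex_hull_centres_subset[of C \<rho>] C(1,2) \<rho>(2) by blast
  then show "\<exists>\<rho>\<in>bsd_step L b. convex hull \<rho> \<subseteq> A \<and> x \<in> convex hull \<rho>"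
    using bsd_stepI[OF C(1)] C(3) by blast
qed

lemma ray_exit_on_segment:
  assumes "\<sigma> \<in> L" "x \<in> rel_interior (convex hull \<sigma>)" "x \<noteq> b \<sigma>"
    and "x \<in> closed_segment p q" "b \<sigma> \<in> closed_segment p q"
    and at_ends: "\<And>e. e \<in> {p, q} \<Longrightarrow> e \<in> rel_interior (convex hull \<sigma>) \<Longrightarrow> b \<sigma> = e"
  obtains y where "y \<in> rel_frontier (convex hull \<sigma>)" "y \<in> closed_segment p q"
    "x \<in> closed_segment (b \<sigma>) y"
proof -
  obtain y where y: "y \<in> rel_frontier (convex hull \<sigma>)" "x \<in> closed_segment (b \<sigma>) y"
    "open_segment (b \<sigma>) y \<subseteq> rel_interior (convex hull \<sigma>)"
    using segment_to_rel_frontier_aux[OF convex_convex_hull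
        finite_imp_bounded_convex_hull[OF simplex_finite[OF assms(1)]] centre[rule_format, OF assms(1)]
        subsetD[OF rel_interior_subset assms(2)]] assms(3) by blast
  have "y \<in> closed_segment p q"
  proof (rule ccontr)
    assume "y \<notin> closed_segment p q"
    then obtain e where "e \<in> {p, q}" "e \<in> open_segment (b \<sigma>) y"
      using segment_leaves_closed_segment_through_end[OF assms(5,4) y(2)] assms(3) by blast
    then show False
      using at_ends y(3) by (auto simp: open_segment_def)
  qed
  then show ?thesis
    using that y(1,2) by blast
qed

lemma union_of_simplices_segment:
  assumes "closed_segment p q \<subseteq> D"
    and on_segment: "\<And>\<sigma>. \<sigma> \<in> L \<Longrightarrow> closed_segment p q \<inter> rel_interior (convex hull \<sigma>) \<noteq> {} \<Longrightarrow>
      b \<sigma> \<in> closed_segment p q"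
    and at_ends: "\<And>\<sigma> e. \<sigma> \<in> L \<Longrightarrow> e \<in> {p, q} \<Longrightarrow> e \<in> rel_interior (convex hull \<sigma>) \<Longrightarrow> b \<sigma> = e"
  shows "union_of_simplices (closed_segment p q) (bsd_step L b)"
  unfolding union_of_simplices_def
proof
  fix x assume x: "x \<in> closed_segment p q"
  then obtain \<sigma>0 where "\<sigma>0 \<in> L" "x \<in> convex hull \<sigma>0"
    using assms(1) unfolding Union_simplices[symmetric] by blast
  then obtain \<sigma> where \<sigma>: "\<sigma> \<in> L" "x \<in> rel_interior (convex hull \<sigma>)"
    using carrier_exists by blast
  have c: "b \<sigma> \<in> rel_interior (convex hull \<sigma>)" "b \<sigma> \<in> closed_segment p q"
    using centre on_segment \<sigma> x by blast+
  show "\<exists>\<rho>\<in>bsd_step L b. convex hull \<rho> \<subseteq> closed_segment p q \<and> x \<in> convex hull \<rho>"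
  proof (cases "x = b \<sigma>")
    case True
    then show ?thesis
      using singleton_bsd_step[OF \<sigma>(1)] c(2) by (intro bexI[of _ "{b \<sigma>}"]) simp_all
  next
    case False
    obtain y where y: "y \<in> rel_frontier (convex hull \<sigma>)" "y \<in> closed_segment p q"
      "x \<in> closed_segment (b \<sigma>) y"
      using ray_exit_on_segment[OF \<sigma> False x c(2) at_ends[OF \<sigma>(1)]] by blast
    obtain \<tau> where \<tau>: "\<tau> \<subset> \<sigma>" "\<tau> \<in> L" "y \<in> rel_interior (convex hull \<tau>)"
      using rel_frontier_carrier[OF \<sigma>(1) y(1)] by blast
    have "b \<tau> \<in> closed_segment p q"
      using on_segment[OF \<tau>(2)] y(2) \<tau>(3) by blast
    then have "collinear {y, b \<tau>, b \<sigma>}"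
      using y(2) c(2) by (intro collinear_subset[OF collinear_closed_segment[of p q]]) auto
    moreover have "y \<in> convex hull \<tau>" "b \<tau> \<in> convex hull \<tau>"
      using \<tau>(2,3) centre rel_interior_subset by blast+
    ultimately have "y = b \<tau>"
      by (intro line_through_rel_interior_meets_face_once[OF simplex_independent[OF \<sigma>(1)] \<tau>(1) c(1)])
    have "b ` {\<tau>, \<sigma>} \<in> bsd_step L b"
      using \<tau>(1,2) \<sigma>(1) by (intro bsd_stepI) (auto simp: chain_def)
    moreover have "convex hull (b ` {\<tau>, \<sigma>}) = closed_segment y (b \<sigma>)"
      using \<open>y = b \<tau>\<close> by (simp add: segment_convex_hull)
    moreover have "closed_segment y (b \<sigma>) \<subseteq> closed_segment p q"
      using y(2) c(2) by (simp add: closed_segment_subset)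
    moreover have "x \<in> closed_segment y (b \<sigma>)"
      using y(3) by (simp add: closed_segment_commute)
    ultimately show ?thesis
      by (metis subset_refl)
  qed
qed

end

context straight_triangulated
begin

lemma union_of_simplices_segment_bsd_step:
  assumes "p \<noteq> q" "open_segment p q \<subseteq> interior D"
    and "p \<in> vertices L \<or> p \<in> frontier D" "q \<in> vertices L \<or> q \<in> frontier D"
  shows "\<exists>b. (\<forall>\<sigma>\<in>L. b \<sigma> \<in> rel_interior (convex hull \<sigma>)) \<and>
    union_of_simplices (closed_segment p q) (bsd_step L b)"
proof -
  let ?s = "closed_segment p q"
  let ?R = "\<lambda>\<sigma>. rel_interior (convex hull \<sigma>)"
  define b where "b \<sigma> = (if p \<in> ?R \<sigma> then p else if q \<in> ?R \<sigma> then q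
    else SOME z. z \<in> ?R \<sigma> \<and> (?s \<inter> ?R \<sigma> \<noteq> {} \<longrightarrow> z \<in> ?s))" for \<sigma>
  have some_centre: "\<exists>z. z \<in> ?R \<sigma> \<and> (?s \<inter> ?R \<sigma> \<noteq> {} \<longrightarrow> z \<in> ?s)" if "\<sigma> \<in> L" for \<sigma>
  proof (cases "?s \<inter> ?R \<sigma> = {}")
    case True
    have "?R \<sigma> \<noteq> {}"
      using simplex_nonempty[OF that] by (simp add: rel_interior_eq_empty)
    then show ?thesis
      using True by blast
  qed blast
  have centre: "b \<sigma> \<in> ?R \<sigma>" and on_segment: "?s \<inter> ?R \<sigma> \<noteq> {} \<Longrightarrow> b \<sigma> \<in> ?s" if "\<sigma> \<in> L" for \<sigma>
    using someI_ex[OF some_centre[OF that]] unfolding b_def by auto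
  have at_ends: "b \<sigma> = e" if "\<sigma> \<in> L" "e \<in> {p, q}" "e \<in> ?R \<sigma>" for \<sigma> e
    using segment_ends_not_in_same_rel_interior[OF that(1) assms] that(2,3) unfolding b_def by auto
  interpret centred_subdivision D L b
    by unfold_locales (use centre in blast)
  have "p \<in> D" "q \<in> D"
    using assms(3,4) vertices_subset closed_region by (auto simp: frontier_def)
  then have "?s \<subseteq> D"
    using assms(2) interior_subset by (auto simp: closed_segment_eq_open)
  then show ?thesis
    using union_of_simplices_segment on_segment at_ends centre by blast
qed

end

lemma realises_bsd_union_of_segments:
  assumes "straight_triangulation D T"
    and "\<forall>i<n. a i \<noteq> b i" "\<forall>i<n. open_segment (a i) (b i) \<subseteq> interior D"
    and "\<forall>i<n. \<forall>p\<in>{a i, b i}. p \<in> vertices T \<or> p \<in> frontier D"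
  shows "\<exists>L. realises_bsd T n L \<and> straight_triangulation D L \<and> vertices T \<subseteq> vertices L \<and>
    (\<forall>i<n. union_of_simplices (closed_segment (a i) (b i)) L)"
  using assms(2-4)
proof (induction n)
  case 0
  show ?case
    using realises_bsd.base assms(1) by blast
next
  case (Suc n)
  have "\<exists>L. realises_bsd T n L \<and> straight_triangulation D L \<and> vertices T \<subseteq> vertices L \<and>
    (\<forall>i<n. union_of_simplices (closed_segment (a i) (b i)) L)"
    using Suc.prems by (intro Suc.IH) simp_all
  then obtain L where L: "realises_bsd T n L" "straight_triangulation D L" "vertices T \<subseteq> vertices L"
    "\<forall>i<n. union_of_simplices (closed_segment (a i) (b i)) L"
    by blast
  interpret straight_triangulated D L
    by (rule straight_triangulated.intro) (rule L(2))
  obtain \<beta> where \<beta>: "\<forall>\<sigma>\<in>L. \<beta> \<sigma> \<in> rel_interior (convex hull \<sigma>)"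
    "union_of_simplices (closed_segment (a n) (b n)) (bsd_step L \<beta>)"
    using union_of_simplices_segment_bsd_step[of "a n" "b n"] Suc.prems L(3) by blast
  interpret centred_subdivision D L \<beta>
    by unfold_locales (rule \<beta>(1))
  have "\<forall>i<Suc n. union_of_simplices (closed_segment (a i) (b i)) (bsd_step L \<beta>)"
    using L(4) \<beta>(2) union_of_simplices_bsd_step less_Suc_eq by auto
  then show ?case
    using realises_bsd.step[OF L(1) \<beta>(1)] straight_triangulation_bsd_step
      vertices_subset_bsd_step L(3) by blast
qed

theorem mainTheorem20:
  fixes D :: "pt set" and T :: "pt set set" and k :: nat and a b :: "nat \<Rightarrow> pt"
  assumes polygon: "D homeomorphic cball (0::pt) 1"
    and tri: "straight_triangulation D T"
    and arcs: "\<forall>i<k. a i \<noteq> b i"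
    and disj: "\<forall>i<k. \<forall>j<k. i \<noteq> j \<longrightarrow> closed_segment (a i) (b i) \<inter> closed_segment (a j) (b j) = {}"
    and ends: "\<forall>i<k. \<forall>p\<in>{a i, b i}. p \<in> vertices T \<or> p \<in> frontier D"
    and inter: "\<forall>i<k. open_segment (a i) (b i) \<subseteq> interior D"
  shows "\<exists>L. realises_bsd T k L \<and> straight_triangulation D L \<and>
           is_subcomplex_set (\<Union>i<k. closed_segment (a i) (b i)) L"
proof -
  obtain L where L: "realises_bsd T k L" "straight_triangulation D L"
      "\<forall>i<k. union_of_simplices (closed_segment (a i) (b i)) L"
    using realises_bsd_union_of_segments[OF tri arcs inter ends] by blast
  have "union_of_simplices (\<Union>i<k. closed_segment (a i) (b i)) L"
    using L(3) by (intro union_of_simplices_UN) simp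
  then show ?thesis
    using L(1,2) union_of_simplices_imp_subcomplex[OF L(2)] by blast
qed

end
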